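(* Let $K,L>0$ and $h>0$. The one-dimensional finite difference operator $F^{1D,e,\delta}$ is Lipschitz continuous with constant \[ C^h=\frac Kh+\frac{2L}{h^2}. \]
   Context: With $A(p,q)=(p^2q)^{1/3}$ (real cube root), $A^\delta(p,q)=\operatorname{sgn}(q)\min(\lvert A(p,q)\rvert,K\lvert p\rvert,L\lvert q\rvert)$ ($\operatorname{sgn}(0)=0$), $A^{\delta,\pm}(p,q)=A^\delta(p^\pm,q^\pm)$ where $x^+=\max(x,0)$, $x^-=\min(x,0)$, the scheme on the uniform grid of spacing $h$ is $-F^{1D,e,\delta}[u]=A^{\delta,+}(\lvert u_x^h\rvert^+,-u_{xx}^h)+A^{\delta,-}(-\lvert u_x^h\rvert^-,-u_{xx}^h)$, with $\lvert u_x^h\rvert^+=\max\{\frac{u(x)-u(x+h)}h,\frac{u(x)-u(x-h)}h,0\}$, $-\lvert u_x^h\rvert^-=\min\{\frac{u(x)-u(x+h)}h,\frac{u(x)-u(x-h)}h,0\}$, $u_{xx}^h=\frac{u(x+h)-2u(x)+u(x-h)}{h^2}$. Writing a finite difference operator as $F^h[u](x)=F^h(x,u(x),u(x)-u(\cdot))$, it is Lipschitz continuous with constant $C$ if $\lvert F^h(x,r,v(\cdot))-F^h(x,s,w(\cdot))\rvert\le C\max(\lvert r-s\rvert,\lVert v-w\rVert_\infty)$ for all grid points $x$. *)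

theory Defs
  imports Complex_Main
begin

(* A(p,q) = (p^2 q)^(1/3), real cube root (root 3 is odd, hence defined and sign-preserving on negatives) *)
definition Acube :: "real \<Rightarrow> real \<Rightarrow> real" where
  "Acube p q = root 3 (p^2 * q)"

definition Adelta :: "real \<Rightarrow> real \<Rightarrow> real \<Rightarrow> real \<Rightarrow> real" where
  "Adelta K L p q = sgn q * min \<bar>Acube p q\<bar> (min (K * \<bar>p\<bar>) (L * \<bar>q\<bar>))"

definition Adelta_plus :: "real \<Rightarrow> real \<Rightarrow> real \<Rightarrow> real \<Rightarrow> real" where
  "Adelta_plus K L p q = Adelta K L (max p 0) (max q 0)"

definition Adelta_minus :: "real \<Rightarrow> real \<Rightarrow> real \<Rightarrow> real \<Rightarrow> real" where
  "Adelta_minus K L p q = Adelta K L (min p 0) (min q 0)"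

(* The scheme F^{1D,e,delta} written in the form F^h(x, r, v(.)), where
   v(y) plays the role of u(x) - u(y) and r the role of u(x).  Then
   (u(x)-u(x+h))/h = v(x+h)/h, (u(x)-u(x-h))/h = v(x-h)/h,
   -u_xx^h = (v(x+h) + v(x-h))/h^2.
   |u_x^h|^+ = max{v(x+h)/h, v(x-h)/h, 0},  -|u_x^h|^- = min{v(x+h)/h, v(x-h)/h, 0}
   and  -F = A^{delta,+}(|u_x|^+, -u_xx) + A^{delta,-}(-|u_x|^-, -u_xx). *)
definition F1D :: "real \<Rightarrow> real \<Rightarrow> real \<Rightarrow> real \<Rightarrow> real \<Rightarrow> (real \<Rightarrow> real) \<Rightarrow> real" where
  "F1D K L h x r v =
     (let a = v (x + h) / h; b = v (x - h) / h;
          mxx = (v (x + h) + v (x - h)) / h^2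
      in - (Adelta_plus K L (max (max a b) 0) mxx
            + Adelta_minus K L (min (min a b) 0) mxx))"

definition F1D_u :: "real \<Rightarrow> real \<Rightarrow> real \<Rightarrow> (real \<Rightarrow> real) \<Rightarrow> real \<Rightarrow> real" where
  "F1D_u K L h u x = F1D K L h x (u x) (\<lambda>y. u x - u y)"

end

theory Submission
  imports Defs
begin

text \<open>On the closed first quadrant let \<open>T(p,q) = min (root 3 (p\<^sup>2 q)) (min (K p) (L q))\<close>;
  then \<open>A\<^sup>\<delta>\<^sup>,\<^sup>+(p,q) = T(p\<^sup>+,q\<^sup>+)\<close> and \<open>A\<^sup>\<delta>\<^sup>,\<^sup>-(p,q) = -T(-p\<^sup>-,-q\<^sup>-)\<close>.
  In each variable \<open>T\<close> is monotone, satisfies \<open>T(t\<cdot>) \<le> t T(\<cdot>)\<close> for \<open>t \<ge> 1\<close>, and is bounded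
  by \<open>K p\<close> resp. \<open>L q\<close>; these three facts make it \<open>K\<close>-Lipschitz in \<open>p\<close> and \<open>L\<close>-Lipschitz in \<open>q\<close>.
  As \<open>T(p,0) = 0\<close>, only one of the two terms of the scheme is active for each sign of
  \<open>-u\<^sub>x\<^sub>x\<^sup>h\<close>, so the constant \<open>K\<close> is paid once, against the \<open>1/h\<close>-Lipschitz one-sided
  slopes, while \<open>-u\<^sub>x\<^sub>x\<^sup>h\<close> is \<open>2/h\<^sup>2\<close>-Lipschitz in the data. The scheme does not depend on
  \<open>u(x)\<close> itself.\<close>

lemma lipschitz_of_mono_subhomogeneous:
  fixes f :: "real \<Rightarrow> real"
  assumes mono: "\<And>x y. 0 \<le> x \<Longrightarrow> x \<le> y \<Longrightarrow> f x \<le> f y"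
    and subhom: "\<And>x t. 0 \<le> x \<Longrightarrow> 1 \<le> t \<Longrightarrow> f (t * x) \<le> t * f x"
    and bound: "\<And>x. 0 \<le> x \<Longrightarrow> f x \<le> c * x"
    and f0: "0 \<le> f 0"
    and "0 \<le> x" "0 \<le> y"
  shows "\<bar>f x - f y\<bar> \<le> c * \<bar>x - y\<bar>"
proof -
  have step: "f y - f x \<le> c * (y - x)" if "0 \<le> x" "x \<le> y" for x y
  proof (cases "x = 0")
    case True
    then show ?thesis using bound[of y] f0 that by simp
  next
    case False
    define t where "t = y / x"
    have x: "x > 0" using False that by simp
    have t: "1 \<le> t" "y = t * x" using x that by (simp_all add: t_def)
    have "f y - f x \<le> (t - 1) * f x" using subhom[OF that(1) t(1)] t(2) by (simp add: algebra_simps)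
    also have "\<dots> \<le> (t - 1) * (c * x)" using bound[OF that(1)] t(1) by (intro mult_left_mono) auto
    also have "\<dots> = c * (y - x)" using t(2) by (simp add: algebra_simps)
    finally show ?thesis .
  qed
  show ?thesis
    using step[of x y] step[of y x] mono[of x y] mono[of y x] assms(5,6) by (cases "x \<le> y") auto
qed

lemma root3_le_scaled:
  assumes "0 \<le> t" "z \<le> t ^ 3 * y"
  shows "root 3 z \<le> t * root 3 y"
proof -
  have "root 3 z \<le> root 3 (t ^ 3 * y)" using assms(2) by simp
  also have "\<dots> = t * root 3 y" using assms(1) by (simp add: real_root_mult real_root_power_cancel)
  finally show ?thesis .
qed

lemma min3_le_scaled:
  fixes t :: real
  assumes "0 \<le> t" "a' \<le> t * a" "b' \<le> t * b" "c' \<le> t * c"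
  shows "min a' (min b' c') \<le> t * min a (min b c)"
  unfolding min_mult_distrib_left using assms by (auto intro: min.mono)

definition Atrunc :: "real \<Rightarrow> real \<Rightarrow> real \<Rightarrow> real \<Rightarrow> real" where
  "Atrunc K L p q = min (root 3 (p\<^sup>2 * q)) (min (K * p) (L * q))"

context
  fixes K L :: real
  assumes K: "0 \<le> K" and L: "0 \<le> L"
begin

lemma Atrunc_nonneg: "0 \<le> p \<Longrightarrow> 0 \<le> q \<Longrightarrow> 0 \<le> Atrunc K L p q"
  unfolding Atrunc_def using K L by simp

lemma Atrunc_zero_right: "0 \<le> p \<Longrightarrow> Atrunc K L p 0 = 0"
  unfolding Atrunc_def using K by simp

lemma Atrunc_le_left: "Atrunc K L p q \<le> K * p"
  unfolding Atrunc_def by simp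

lemma Atrunc_le_right: "Atrunc K L p q \<le> L * q"
  unfolding Atrunc_def by simp

lemma Atrunc_mono:
  assumes "0 \<le> p" "p \<le> p'" "0 \<le> q" "q \<le> q'"
  shows "Atrunc K L p q \<le> Atrunc K L p' q'"
proof -
  have "p\<^sup>2 * q \<le> p'\<^sup>2 * q'" using assms by (intro mult_mono power_mono) auto
  then show ?thesis
    unfolding Atrunc_def using assms K L by (intro min.mono mult_left_mono) auto
qed

lemma Atrunc_subhom_left:
  assumes "0 \<le> p" "0 \<le> q" "1 \<le> t"
  shows "Atrunc K L (t * p) q \<le> t * Atrunc K L p q"
proof -
  have "t ^ 2 \<le> t ^ 3" using assms(3) by (intro power_increasing) auto
  then have "t ^ 2 * (p\<^sup>2 * q) \<le> t ^ 3 * (p\<^sup>2 * q)" using assms by (intro mult_right_mono) auto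
  then have "root 3 ((t * p)\<^sup>2 * q) \<le> t * root 3 (p\<^sup>2 * q)"
    using assms by (intro root3_le_scaled) (auto simp: power_mult_distrib)
  moreover have "L * q \<le> t * (L * q)" using mult_right_mono[OF assms(3), of "L * q"] assms L by simp
  ultimately show ?thesis
    unfolding Atrunc_def using assms by (intro min3_le_scaled) auto
qed

lemma Atrunc_subhom_right:
  assumes "0 \<le> p" "0 \<le> q" "1 \<le> t"
  shows "Atrunc K L p (t * q) \<le> t * Atrunc K L p q"
proof -
  have "t ^ 1 \<le> t ^ 3" using assms(3) by (intro power_increasing) auto
  then have "t * (p\<^sup>2 * q) \<le> t ^ 3 * (p\<^sup>2 * q)" using assms by (intro mult_right_mono) auto
  then have "root 3 (p\<^sup>2 * (t * q)) \<le> t * root 3 (p\<^sup>2 * q)"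
    using assms by (intro root3_le_scaled) (auto simp: algebra_simps)
  moreover have "K * p \<le> t * (K * p)" using mult_right_mono[OF assms(3), of "K * p"] assms K by simp
  ultimately show ?thesis
    unfolding Atrunc_def using assms by (intro min3_le_scaled) auto
qed

lemma Atrunc_lipschitz:
  assumes "0 \<le> p" "0 \<le> p'" "0 \<le> q" "0 \<le> q'"
  shows "\<bar>Atrunc K L p q - Atrunc K L p' q'\<bar> \<le> K * \<bar>p - p'\<bar> + L * \<bar>q - q'\<bar>"
proof -
  have "\<bar>Atrunc K L p q - Atrunc K L p' q\<bar> \<le> K * \<bar>p - p'\<bar>"
    using assms by (intro lipschitz_of_mono_subhomogeneous[where f = "\<lambda>p. Atrunc K L p q"])
      (auto intro: Atrunc_mono Atrunc_subhom_left Atrunc_nonneg Atrunc_le_left)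
  moreover have "\<bar>Atrunc K L p' q - Atrunc K L p' q'\<bar> \<le> L * \<bar>q - q'\<bar>"
    using assms by (intro lipschitz_of_mono_subhomogeneous[where f = "Atrunc K L p'"])
      (auto intro: Atrunc_mono Atrunc_subhom_right Atrunc_nonneg Atrunc_le_right)
  ultimately show ?thesis by linarith
qed

lemma Atrunc_pair_lipschitz:
  assumes "0 \<le> p" "0 \<le> p'" "0 \<le> n" "0 \<le> n'" "\<bar>p - p'\<bar> \<le> D" "\<bar>n - n'\<bar> \<le> D"
  shows "\<bar>(Atrunc K L p (max m 0) - Atrunc K L n (max (-m) 0))
          - (Atrunc K L p' (max m' 0) - Atrunc K L n' (max (-m') 0))\<bar> \<le> K * D + L * \<bar>m - m'\<bar>"
proof -
  have KD: "K * \<bar>p - p'\<bar> \<le> K * D" "K * \<bar>n - n'\<bar> \<le> K * D" "0 \<le> K * D"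
    using assms K by (auto intro: mult_left_mono)
  consider "0 \<le> m" "0 \<le> m'" | "m \<le> 0" "m' \<le> 0" | "0 < m" "m' < 0" | "m < 0" "0 < m'"
    by linarith
  then show ?thesis
  proof cases
    case 1
    then show ?thesis
      using Atrunc_lipschitz[of p p' m m'] assms KD by (simp add: Atrunc_zero_right)
  next
    case 2
    then show ?thesis
      using Atrunc_lipschitz[of n n' "-m" "-m'"] assms KD
      by (simp add: Atrunc_zero_right abs_minus_commute)
  next
    case 3
    then show ?thesis
      using Atrunc_nonneg[of p m] Atrunc_le_right[of p m] Atrunc_nonneg[of n' "-m'"]
        Atrunc_le_right[of n' "-m'"] assms KD L
      by (simp add: Atrunc_zero_right right_diff_distrib)
  next
    case 4
    then show ?thesis
      using Atrunc_nonneg[of n "-m"] Atrunc_le_right[of n "-m"] Atrunc_nonneg[of p' m']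
        Atrunc_le_right[of p' m'] assms KD L
      by (simp add: Atrunc_zero_right right_diff_distrib)
  qed
qed

end

lemma Adelta_plus_eq_Atrunc:
  assumes "0 \<le> K" "0 \<le> L"
  shows "Adelta_plus K L p q = Atrunc K L (max p 0) (max q 0)"
  using assms unfolding Adelta_plus_def Adelta_def Atrunc_def Acube_def
  by (cases "0 < q") (auto simp: real_root_ge_zero max_def)

lemma Adelta_minus_eq_Atrunc:
  assumes "0 \<le> K" "0 \<le> L"
  shows "Adelta_minus K L p q = - Atrunc K L (max (-p) 0) (max (-q) 0)"
proof -
  have "\<bar>Acube (min p 0) (min q 0)\<bar> = root 3 \<bar>(min p 0)\<^sup>2 * min q 0\<bar>"
    unfolding Acube_def by (simp add: real_root_abs)
  also have "\<bar>(min p 0)\<^sup>2 * min q 0\<bar> = (max (-p) 0)\<^sup>2 * max (-q) 0"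
    by (simp add: abs_mult min_def max_def)
  finally have "\<bar>Acube (min p 0) (min q 0)\<bar> = root 3 ((max (-p) 0)\<^sup>2 * max (-q) 0)" .
  then show ?thesis
    using assms unfolding Adelta_minus_def Adelta_def Atrunc_def
    by (cases "q < 0") (auto simp: max_def min_def)
qed

lemma F1D_eq_Atrunc:
  assumes "0 \<le> K" "0 \<le> L"
  shows "F1D K L h x r v =
    (let a = v (x + h) / h; b = v (x - h) / h; m = (v (x + h) + v (x - h)) / h\<^sup>2
     in - (Atrunc K L (max (max a b) 0) (max m 0)
           - Atrunc K L (max (max (-a) (-b)) 0) (max (-m) 0)))"
proof -
  have "max (- min (min a b) 0) 0 = max (max (-a) (-b)) 0" for a b :: real by linarith
  then show ?thesis
    unfolding F1D_def Let_def Adelta_plus_eq_Atrunc[OF assms] Adelta_minus_eq_Atrunc[OF assms]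
    by simp
qed

lemma F1D_lipschitz:
  assumes K: "0 \<le> K" and L: "0 \<le> L" and h: "0 < h"
    and right: "\<bar>v (x + h) - w (x + h)\<bar> \<le> M" and left: "\<bar>v (x - h) - w (x - h)\<bar> \<le> M"
  shows "\<bar>F1D K L h x r v - F1D K L h x s w\<bar> \<le> (K / h + 2 * L / h\<^sup>2) * M"
proof -
  define a b m a' b' m' where
    "a = v (x + h) / h" "b = v (x - h) / h" "m = (v (x + h) + v (x - h)) / h\<^sup>2"
    "a' = w (x + h) / h" "b' = w (x - h) / h" "m' = (w (x + h) + w (x - h)) / h\<^sup>2"
  have da: "\<bar>a - a'\<bar> \<le> M / h" and db: "\<bar>b - b'\<bar> \<le> M / h"
    unfolding a_b_m_a'_b'_m'_def using right left h
    by (simp_all add: diff_divide_distrib[symmetric] divide_right_mono)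
  have "\<bar>m - m'\<bar> = \<bar>(v (x + h) - w (x + h)) + (v (x - h) - w (x - h))\<bar> / h\<^sup>2"
    unfolding a_b_m_a'_b'_m'_def by (simp add: diff_divide_distrib[symmetric] algebra_simps)
  also have "\<dots> \<le> 2 * M / h\<^sup>2" using right left by (intro divide_right_mono) auto
  finally have dm: "L * \<bar>m - m'\<bar> \<le> L * (2 * M / h\<^sup>2)" using L by (rule mult_left_mono)
  have "\<bar>max (max a b) 0 - max (max a' b') 0\<bar> \<le> M / h"
    and "\<bar>max (max (-a) (-b)) 0 - max (max (-a') (-b')) 0\<bar> \<le> M / h"
    using da db by linarith+
  from Atrunc_pair_lipschitz[OF K L max.cobounded2 max.cobounded2 max.cobounded2 max.cobounded2 this]
  have "\<bar>F1D K L h x r v - F1D K L h x s w\<bar> \<le> K * (M / h) + L * \<bar>m - m'\<bar>"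
    unfolding F1D_eq_Atrunc[OF K L] Let_def a_b_m_a'_b'_m'_def[symmetric]
    by (simp only: minus_diff_minus abs_minus_cancel)
  also have "\<dots> \<le> (K / h + 2 * L / h\<^sup>2) * M" using dm by (simp add: field_simps)
  finally show ?thesis .
qed

theorem mainTheorem10:
  fixes K L h :: real
  assumes "K > 0" and "L > 0" and "h > 0"
  shows "\<forall>(k::int) (r::real) (s::real) (v::real \<Rightarrow> real) (w::real \<Rightarrow> real) (M::real).
           \<bar>r - s\<bar> \<le> M \<longrightarrow> (\<forall>j::int. \<bar>v (h * of_int j) - w (h * of_int j)\<bar> \<le> M) \<longrightarrow>
           \<bar>F1D K L h (h * of_int k) r v - F1D K L h (h * of_int k) s w\<bar>
             \<le> (K / h + 2 * L / h^2) * M"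
proof (intro allI impI)
  fix k :: int and r s M :: real and v w :: "real \<Rightarrow> real"
  assume grid: "\<forall>j::int. \<bar>v (h * of_int j) - w (h * of_int j)\<bar> \<le> M"
  have "h * of_int (k + 1) = h * of_int k + h" "h * of_int (k - 1) = h * of_int k - h"
    by (simp_all add: algebra_simps)
  then have "\<bar>v (h * of_int k + h) - w (h * of_int k + h)\<bar> \<le> M"
    "\<bar>v (h * of_int k - h) - w (h * of_int k - h)\<bar> \<le> M"
    using grid[rule_format, of "k + 1"] grid[rule_format, of "k - 1"] by simp_all
  then show "\<bar>F1D K L h (h * of_int k) r v - F1D K L h (h * of_int k) s w\<bar>
      \<le> (K / h + 2 * L / h^2) * M"
    using assms by (intro F1D_lipschitz) auto
qed

end
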